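(* Let $r:\Theta^K\times S_K\to[0,1]$ be a swapping ratio, i.e. for every $\boldsymbol\theta\in\Theta^K$ the map $r(\boldsymbol\theta,\cdot)$ is a probability mass function on $S_K$, and for every $\sigma\in S_K$ the map $r(\cdot,\sigma)$ is measurable on $(\Theta^K,\mathcal B^K)$. Define the swapping acceptance probability $$\alpha_{\mathrm{swap}}(\boldsymbol\theta,\sigma)=\begin{cases}\min\left\{1,\dfrac{\boldsymbol\pi(\boldsymbol\theta_\sigma)\,r(\boldsymbol\theta_\sigma,\sigma^{-1})}{\boldsymbol\pi(\boldsymbol\theta)\,r(\boldsymbol\theta,\sigma)}\right\}, & r(\boldsymbol\theta,\sigma)>0,\\ 0,& r(\boldsymbol\theta,\sigma)=0,\end{cases}$$ and the swapping Markov kernel $$\mathbf q(\boldsymbol\theta,B)=\sum_{\sigma\in S_K} r(\boldsymbol\theta,\sigma)\Big[(1-\alpha_{\mathrm{swap}}(\boldsymbol\theta,\sigma))\delta_{\boldsymbol\theta}(B)+\alpha_{\mathrm{swap}}(\boldsymbol\theta,\sigma)\delta_{\boldsymbol\theta_\sigma}(B)\Big],\qquad \boldsymbol\theta\in\Theta^K,\ B\in\mathcal B^K.$$ Then $\mathbf q$ is reversible with respect to the product measure $\boldsymbol\mu$.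
   Context: Let $\Theta$ be a separable Banach space with Borel $\sigma$-algebra $\mathcal B(\Theta)$, $\mu_{\mathrm{pr}}$ a probability measure on $\Theta$, and $\Phi:\Theta\to\mathbb R$ a measurable potential. Fix $K\ge1$ and temperatures $1=T_1<T_2<\dots<T_K\le\infty$. For $k=1,\dots,K$, $\mu_k$ is the probability measure with $\mu_{\mathrm{pr}}$-density $\pi_k(\theta)=e^{-\Phi(\theta)/T_k}/Z_k$, $Z_k=\int_\Theta e^{-\Phi(\theta)/T_k}\mu_{\mathrm{pr}}(d\theta)$ (with $\mu_K=\mu_{\mathrm{pr}}$ if $T_K=\infty$). Let $\Theta^K$ be the $K$-fold product with product $\sigma$-algebra $\mathcal B^K$, $\boldsymbol\mu_{\mathrm{pr}}=\mu_{\mathrm{pr}}\times\dots\times\mu_{\mathrm{pr}}$, and $\boldsymbol\mu=\mu_1\times\dots\times\mu_K$, which has $\boldsymbol\mu_{\mathrm{pr}}$-density $\boldsymbol\pi(\boldsymbol\theta)=\prod_{k=1}^K\pi_k(\theta_k)$. Let $\mathscr S_K$ be the set of permutations of $\{1,\dots,K\}$ and $S_K\subseteq\mathscr S_K$ a subset closed under inversion. For $\sigma\in S_K$ and $\boldsymbol\theta=(\theta_1,\dots,\theta_K)$, write $\boldsymbol\theta_\sigma=(\theta_{\sigma(1)},\dots,\theta_{\sigma(K)})$. A Markov kernel $p$ on a space $W$ is $\nu$-reversible if $\int_B p(\theta,A)\nu(d\theta)=\int_A p(\theta,B)\nu(d\theta)$ for all measurable $A,B$. $\delta_{\boldsymbol\theta}$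 is the Dirac measure at $\boldsymbol\theta$. *)

theory Defs
  imports "HOL-Probability.Probability" "HOL-Combinatorics.Permutations"
begin

text \<open>Inverse temperature 1/T, with 1/\<infinity> = 0 (so T = \<infinity> gives the prior).\<close>
definition invtemp :: "ereal \<Rightarrow> real" where
  "invtemp T = (if T = \<infinity> then 0 else 1 / real_of_ereal T)"

definition tdens :: "'a measure \<Rightarrow> ('a \<Rightarrow> real) \<Rightarrow> (nat \<Rightarrow> ereal) \<Rightarrow> nat \<Rightarrow> 'a \<Rightarrow> real" where
  "tdens M \<Phi> T k x =
     exp (- \<Phi> x * invtemp (T k)) / (\<integral>y. exp (- \<Phi> y * invtemp (T k)) \<partial>M)"

definition tmeas :: "'a measure \<Rightarrow> ('a \<Rightarrow> real) \<Rightarrow> (nat \<Rightarrow> ereal) \<Rightarrow> nat \<Rightarrow> 'a measure" where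
  "tmeas M \<Phi> T k = density M (\<lambda>x. ennreal (tdens M \<Phi> T k x))"

definition pdens :: "nat \<Rightarrow> 'a measure \<Rightarrow> ('a \<Rightarrow> real) \<Rightarrow> (nat \<Rightarrow> ereal) \<Rightarrow> (nat \<Rightarrow> 'a) \<Rightarrow> real" where
  "pdens K M \<Phi> T \<theta> = (\<Prod>k\<in>{1..K}. tdens M \<Phi> T k (\<theta> k))"

definition permute_state :: "(nat \<Rightarrow> 'a) \<Rightarrow> (nat \<Rightarrow> nat) \<Rightarrow> (nat \<Rightarrow> 'a)" where
  "permute_state \<theta> \<sigma> = \<theta> \<circ> \<sigma>"

definition alpha_swap ::
  "((nat \<Rightarrow> 'a) \<Rightarrow> real) \<Rightarrow> ((nat \<Rightarrow> 'a) \<Rightarrow> (nat \<Rightarrow> nat) \<Rightarrow> real) \<Rightarrow> (nat \<Rightarrow> 'a) \<Rightarrow> (nat \<Rightarrow> nat) \<Rightarrow> real" where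
  "alpha_swap \<pi> r \<theta> \<sigma> =
     (if r \<theta> \<sigma> > 0
      then min 1 ((\<pi> (permute_state \<theta> \<sigma>) * r (permute_state \<theta> \<sigma>) (inv \<sigma>)) / (\<pi> \<theta> * r \<theta> \<sigma>))
      else 0)"

definition q_swap ::
  "(nat \<Rightarrow> nat) set \<Rightarrow> ((nat \<Rightarrow> 'a) \<Rightarrow> real) \<Rightarrow> ((nat \<Rightarrow> 'a) \<Rightarrow> (nat \<Rightarrow> nat) \<Rightarrow> real)
    \<Rightarrow> (nat \<Rightarrow> 'a) \<Rightarrow> (nat \<Rightarrow> 'a) set \<Rightarrow> real" where
  "q_swap S \<pi> r \<theta> B =
     (\<Sum>\<sigma>\<in>S. r \<theta> \<sigma> * ((1 - alpha_swap \<pi> r \<theta> \<sigma>) * indicator B \<theta>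
                        + alpha_swap \<pi> r \<theta> \<sigma> * indicator B (permute_state \<theta> \<sigma>)))"

definition reversible :: "'b measure \<Rightarrow> ('b \<Rightarrow> 'b set \<Rightarrow> real) \<Rightarrow> bool" where
  "reversible \<nu> p \<longleftrightarrow>
     (\<forall>A\<in>sets \<nu>. \<forall>B\<in>sets \<nu>.
        (\<integral>\<^sup>+x\<in>B. ennreal (p x A) \<partial>\<nu>) = (\<integral>\<^sup>+x\<in>A. ennreal (p x B) \<partial>\<nu>))"

end

theory Submission
  imports Defs
begin

text \<open>
  Multiplied by the density \<open>\<pi>\<close>, the swap kernel splits into a rejection part, which lives on
  the diagonal and is therefore symmetric in the two sets, and, for each \<open>\<sigma>\<close>, a move part
  carried by the flow \<open>\<pi>(\<theta>) r(\<theta>,\<sigma>) \<alpha>(\<theta>,\<sigma>) = min {\<pi>(\<theta>) r(\<theta>,\<sigma>), \<pi>(\<theta>\<^sub>\<sigma>) r(\<theta>\<^sub>\<sigma>,\<sigma>\<^sup>-\<^sup>1)}\<close>.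
  This flow is invariant under \<open>(\<theta>,\<sigma>) \<mapsto> (\<theta>\<^sub>\<sigma>,\<sigma>\<^sup>-\<^sup>1)\<close> (detailed balance), and the product prior
  is invariant under permutations of the coordinates, so the substitution \<open>\<theta> \<mapsto> \<theta>\<^sub>\<sigma>\<close> followed by
  reindexing \<open>\<sigma> \<mapsto> \<sigma>\<^sup>-\<^sup>1\<close> over the inverse-closed set \<open>S\<close> exchanges the two sets in the move
  part. Finally, the product of the tempered measures is the product prior with density \<open>\<pi>\<close>.
\<close>

lemma indicator_PiE_eq_prod:
  assumes "finite I" "x \<in> extensional I"
  shows "indicator (Pi\<^sub>E I A) x = (\<Prod>i\<in>I. indicator (A i) (x i) :: ennreal)"
  using assms by (auto simp: indicator_def PiE_iff intro: prod_zero)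

lemma PiM_density:
  fixes M :: "'i \<Rightarrow> 'a measure" and f :: "'i \<Rightarrow> 'a \<Rightarrow> real"
  assumes I: "finite I" and M: "\<And>i. sigma_finite_measure (M i)"
    and f_meas: "\<And>i. i \<in> I \<Longrightarrow> f i \<in> borel_measurable (M i)"
    and f_nonneg: "\<And>i x. i \<in> I \<Longrightarrow> 0 \<le> f i x"
  shows "PiM I (\<lambda>i. density (M i) (\<lambda>x. ennreal (f i x))) =
    density (PiM I M) (\<lambda>x. ennreal (\<Prod>i\<in>I. f i (x i)))"
proof -
  define N where "N i = (if i \<in> I then density (M i) (\<lambda>x. ennreal (f i x)) else M i)" for i
  interpret M: product_sigma_finite M
    by (simp add: product_sigma_finite_def M)
  have "sigma_finite_measure (N i)" for i
    using sigma_finite_measure.sigma_finite_iff_density_finite'[OF M[of i]] f_meas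
    by (auto simp: N_def M)
  then interpret N: product_sigma_finite N
    by (simp add: product_sigma_finite_def)
  have sets_N: "sets (N i) = sets (M i)" for i
    by (simp add: N_def)
  have "density (PiM I M) (\<lambda>x. ennreal (\<Prod>i\<in>I. f i (x i))) = PiM I N"
  proof (rule N.PiM_eqI[OF I])
    show "sets (density (PiM I M) (\<lambda>x. ennreal (\<Prod>i\<in>I. f i (x i)))) = sets (PiM I N)"
      by (simp add: sets_N cong: sets_PiM_cong)
  next
    fix A assume "\<And>i. i \<in> I \<Longrightarrow> A i \<in> sets (N i)"
    then have A: "\<And>i. i \<in> I \<Longrightarrow> A i \<in> sets (M i)"
      by (simp add: sets_N)
    note [measurable] = f_meas A sets_PiM_I_finite[OF I A]
    have "emeasure (density (PiM I M) (\<lambda>x. ennreal (\<Prod>i\<in>I. f i (x i)))) (Pi\<^sub>E I A)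
        = (\<integral>\<^sup>+x. (\<Prod>i\<in>I. ennreal (f i (x i)) * indicator (A i) (x i)) \<partial>PiM I M)"
      using I f_nonneg
      by (auto simp: emeasure_density space_PiM PiE_iff indicator_PiE_eq_prod prod.distrib
          prod_ennreal intro!: nn_integral_cong)
    also have "\<dots> = (\<Prod>i\<in>I. emeasure (N i) (A i))"
      using I by (subst M.product_nn_integral_prod) (auto simp: N_def emeasure_density)
    finally show "emeasure (density (PiM I M) (\<lambda>x. ennreal (\<Prod>i\<in>I. f i (x i)))) (Pi\<^sub>E I A)
        = (\<Prod>i\<in>I. emeasure (N i) (A i))" .
  qed
  then show ?thesis
    by (simp add: N_def cong: PiM_cong)
qed

lemma permute_state_inv [simp]:
  assumes "bij \<sigma>"
  shows "permute_state (permute_state \<theta> \<sigma>) (inv \<sigma>) = \<theta>"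
  using assms by (simp add: permute_state_def fun_eq_iff bij_is_surj surj_f_inv_f)

lemma permute_state_eq_restrict:
  assumes "\<sigma> permutes I" "\<theta> \<in> extensional I"
  shows "permute_state \<theta> \<sigma> = (\<lambda>i\<in>I. \<theta> (\<sigma> i))"
proof
  fix i
  show "permute_state \<theta> \<sigma> i = (\<lambda>i\<in>I. \<theta> (\<sigma> i)) i"
    using assms extensional_arb[OF assms(2), of i] by (simp add: permute_state_def permutes_not_in)
qed

lemma measurable_permute_state:
  assumes "\<sigma> permutes I"
  shows "(\<lambda>\<theta>. permute_state \<theta> \<sigma>) \<in> PiM I (\<lambda>_. M) \<rightarrow>\<^sub>M PiM I (\<lambda>_. M)"
proof -
  have "(\<lambda>\<theta>. \<lambda>i\<in>I. \<theta> (\<sigma> i)) \<in> PiM I (\<lambda>_. M) \<rightarrow>\<^sub>M PiM I (\<lambda>_. M)"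
    using permutes_in_image[OF assms]
    by (intro measurable_restrict measurable_component_singleton) simp
  moreover have "permute_state \<theta> \<sigma> = (\<lambda>i\<in>I. \<theta> (\<sigma> i))" if "\<theta> \<in> space (PiM I (\<lambda>_. M))" for \<theta>
    using that by (intro permute_state_eq_restrict assms) (simp add: space_PiM PiE_iff)
  ultimately show ?thesis
    by (simp cong: measurable_cong)
qed

lemma distr_permute_state:
  assumes "prob_space M" "\<sigma> permutes I"
  shows "distr (PiM I (\<lambda>_. M)) (PiM I (\<lambda>_. M)) (\<lambda>\<theta>. permute_state \<theta> \<sigma>) = PiM I (\<lambda>_. M)"
proof -
  have "permute_state \<theta> \<sigma> = (\<lambda>i\<in>I. \<theta> (\<sigma> i))" if "\<theta> \<in> space (PiM I (\<lambda>_. M))" for \<theta>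
    using that by (intro permute_state_eq_restrict assms) (simp add: space_PiM PiE_iff)
  then have "distr (PiM I (\<lambda>_. M)) (PiM I (\<lambda>_. M)) (\<lambda>\<theta>. permute_state \<theta> \<sigma>)
      = distr (PiM I (\<lambda>_. M)) (PiM I (\<lambda>_. M)) (\<lambda>\<theta>. \<lambda>i\<in>I. \<theta> (\<sigma> i))"
    by (intro distr_cong) simp_all
  also have "\<dots> = PiM I (\<lambda>_. M)"
    using distr_PiM_reindex[of I "\<lambda>_. M" \<sigma> I] assms
    by (simp add: permutes_inj_on permutes_in_image Pi_iff)
  finally show ?thesis .
qed

definition swap_flow ::
  "((nat \<Rightarrow> 'a) \<Rightarrow> real) \<Rightarrow> ((nat \<Rightarrow> 'a) \<Rightarrow> (nat \<Rightarrow> nat) \<Rightarrow> real) \<Rightarrow> (nat \<Rightarrow> 'a) \<Rightarrow> (nat \<Rightarrow> nat) \<Rightarrow> real"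
  where "swap_flow \<pi> r \<theta> \<sigma> = \<pi> \<theta> * r \<theta> \<sigma> * alpha_swap \<pi> r \<theta> \<sigma>"

lemma swap_flow_eq_min:
  assumes "0 \<le> \<pi> \<theta>" "0 \<le> r \<theta> \<sigma>" "0 \<le> \<pi> (permute_state \<theta> \<sigma>) * r (permute_state \<theta> \<sigma>) (inv \<sigma>)"
  shows "swap_flow \<pi> r \<theta> \<sigma> =
    min (\<pi> \<theta> * r \<theta> \<sigma>) (\<pi> (permute_state \<theta> \<sigma>) * r (permute_state \<theta> \<sigma>) (inv \<sigma>))"
proof (cases "\<pi> \<theta> * r \<theta> \<sigma> = 0")
  case True
  then show ?thesis
    using assms by (auto simp: swap_flow_def alpha_swap_def)
next
  case False
  then have "0 < \<pi> \<theta> * r \<theta> \<sigma>" "0 < r \<theta> \<sigma>"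
    using assms by (auto simp: less_le)
  then show ?thesis
    using assms(3) by (simp add: swap_flow_def alpha_swap_def min_mult_distrib_left)
qed

lemma swap_flow_permute_state:
  assumes "bij \<sigma>"
    and "0 \<le> \<pi> \<theta>" "0 \<le> r \<theta> \<sigma>"
    and "0 \<le> \<pi> (permute_state \<theta> \<sigma>)" "0 \<le> r (permute_state \<theta> \<sigma>) (inv \<sigma>)"
  shows "swap_flow \<pi> r (permute_state \<theta> \<sigma>) (inv \<sigma>) = swap_flow \<pi> r \<theta> \<sigma>"
  using assms by (simp add: swap_flow_eq_min inv_inv_eq min.commute)

lemma density_times_q_swap:
  "\<pi> \<theta> * q_swap S \<pi> r \<theta> A =
    (\<Sum>\<sigma>\<in>S. (\<pi> \<theta> * r \<theta> \<sigma> - swap_flow \<pi> r \<theta> \<sigma>) * indicator A \<theta>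
      + swap_flow \<pi> r \<theta> \<sigma> * indicator A (permute_state \<theta> \<sigma>))"
  by (simp add: q_swap_def swap_flow_def sum_distrib_left algebra_simps)

context
  fixes P :: "(nat \<Rightarrow> 'a) measure" and S :: "(nat \<Rightarrow> nat) set"
    and \<pi> :: "(nat \<Rightarrow> 'a) \<Rightarrow> real" and r :: "(nat \<Rightarrow> 'a) \<Rightarrow> (nat \<Rightarrow> nat) \<Rightarrow> real"
  assumes finite_S: "finite S"
    and S_bij: "\<And>\<sigma>. \<sigma> \<in> S \<Longrightarrow> bij \<sigma>"
    and S_inv: "\<And>\<sigma>. \<sigma> \<in> S \<Longrightarrow> inv \<sigma> \<in> S"
    and measurable_permute: "\<And>\<sigma>. \<sigma> \<in> S \<Longrightarrow> (\<lambda>\<theta>. permute_state \<theta> \<sigma>) \<in> P \<rightarrow>\<^sub>M P"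
    and distr_permute: "\<And>\<sigma>. \<sigma> \<in> S \<Longrightarrow> distr P P (\<lambda>\<theta>. permute_state \<theta> \<sigma>) = P"
    and \<pi>_nonneg: "\<And>\<theta>. \<theta> \<in> space P \<Longrightarrow> 0 \<le> \<pi> \<theta>"
    and \<pi>_meas: "\<pi> \<in> borel_measurable P"
    and r_nonneg: "\<And>\<theta> \<sigma>. \<theta> \<in> space P \<Longrightarrow> \<sigma> \<in> S \<Longrightarrow> 0 \<le> r \<theta> \<sigma>"
    and r_meas: "\<And>\<sigma>. \<sigma> \<in> S \<Longrightarrow> (\<lambda>\<theta>. r \<theta> \<sigma>) \<in> borel_measurable P"
begin

lemma space_permute_state: "\<theta> \<in> space P \<Longrightarrow> \<sigma> \<in> S \<Longrightarrow> permute_state \<theta> \<sigma> \<in> space P"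
  using measurable_space[OF measurable_permute] .

lemma nn_integral_permute_state:
  assumes "\<sigma> \<in> S" "f \<in> borel_measurable P"
  shows "(\<integral>\<^sup>+\<theta>. f (permute_state \<theta> \<sigma>) \<partial>P) = (\<integral>\<^sup>+\<theta>. f \<theta> \<partial>P)"
  using nn_integral_distr[OF measurable_permute, of \<sigma> f] assms by (simp add: distr_permute)

lemma alpha_swap_bounds:
  assumes "\<theta> \<in> space P" "\<sigma> \<in> S"
  shows "0 \<le> alpha_swap \<pi> r \<theta> \<sigma>" "alpha_swap \<pi> r \<theta> \<sigma> \<le> 1"
  using assms space_permute_state[OF assms] S_inv[OF assms(2)]
  by (auto simp: alpha_swap_def \<pi>_nonneg r_nonneg)

lemma swap_flow_bounds:
  assumes "\<theta> \<in> space P" "\<sigma> \<in> S"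
  shows "0 \<le> swap_flow \<pi> r \<theta> \<sigma>" "swap_flow \<pi> r \<theta> \<sigma> \<le> \<pi> \<theta> * r \<theta> \<sigma>"
  using assms space_permute_state[OF assms] S_inv[OF assms(2)]
  by (simp_all add: swap_flow_eq_min \<pi>_nonneg r_nonneg)

lemma q_swap_nonneg: "\<theta> \<in> space P \<Longrightarrow> 0 \<le> q_swap S \<pi> r \<theta> A"
  unfolding q_swap_def using alpha_swap_bounds r_nonneg by (intro sum_nonneg) auto

lemma borel_measurable_alpha_swap:
  assumes "\<sigma> \<in> S"
  shows "(\<lambda>\<theta>. alpha_swap \<pi> r \<theta> \<sigma>) \<in> borel_measurable P"
proof -
  note [measurable] = \<pi>_meas r_meas[OF assms] r_meas[OF S_inv[OF assms]] measurable_permute[OF assms]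
  show ?thesis
    unfolding alpha_swap_def by measurable
qed

lemma borel_measurable_swap_flow:
  "\<sigma> \<in> S \<Longrightarrow> (\<lambda>\<theta>. swap_flow \<pi> r \<theta> \<sigma>) \<in> borel_measurable P"
  unfolding swap_flow_def using \<pi>_meas r_meas borel_measurable_alpha_swap by measurable

lemma borel_measurable_q_swap:
  assumes "A \<in> sets P"
  shows "(\<lambda>\<theta>. q_swap S \<pi> r \<theta> A) \<in> borel_measurable P"
  unfolding q_swap_def using assms r_meas borel_measurable_alpha_swap measurable_permute
  by measurable

lemma ennreal_density_times_q_swap:
  assumes "\<theta> \<in> space P"
  shows "ennreal (\<pi> \<theta>) * (ennreal (q_swap S \<pi> r \<theta> A) * indicator B \<theta>) =
    (\<Sum>\<sigma>\<in>S. ennreal ((\<pi> \<theta> * r \<theta> \<sigma> - swap_flow \<pi> r \<theta> \<sigma>) * indicator (A \<inter> B) \<theta>)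
      + ennreal (swap_flow \<pi> r \<theta> \<sigma> * indicator B \<theta> * indicator A (permute_state \<theta> \<sigma>)))"
    (is "_ = ?rhs")
proof -
  have "ennreal (\<pi> \<theta>) * (ennreal (q_swap S \<pi> r \<theta> A) * indicator B \<theta>)
      = ennreal (\<pi> \<theta> * q_swap S \<pi> r \<theta> A * indicator B \<theta>)"
    using assms \<pi>_nonneg q_swap_nonneg by (simp add: ennreal_mult indicator_def)
  also have "\<dots> = ennreal (\<Sum>\<sigma>\<in>S. (\<pi> \<theta> * r \<theta> \<sigma> - swap_flow \<pi> r \<theta> \<sigma>) * indicator (A \<inter> B) \<theta>
      + swap_flow \<pi> r \<theta> \<sigma> * indicator B \<theta> * indicator A (permute_state \<theta> \<sigma>))"
    by (simp add: density_times_q_swap sum_distrib_left sum_distrib_right indicator_inter_arith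
        algebra_simps)
  also have "\<dots> = ?rhs"
    using assms swap_flow_bounds by (simp add: sum_ennreal[symmetric] indicator_def del: sum_ennreal)
  finally show ?thesis .
qed

lemma nn_integral_q_swap:
  assumes A: "A \<in> sets P" and B: "B \<in> sets P"
  shows "(\<integral>\<^sup>+\<theta>\<in>B. ennreal (q_swap S \<pi> r \<theta> A) \<partial>density P \<pi>) =
    (\<Sum>\<sigma>\<in>S. (\<integral>\<^sup>+\<theta>. ennreal ((\<pi> \<theta> * r \<theta> \<sigma> - swap_flow \<pi> r \<theta> \<sigma>) * indicator (A \<inter> B) \<theta>) \<partial>P)
      + (\<integral>\<^sup>+\<theta>. ennreal (swap_flow \<pi> r \<theta> \<sigma> * indicator B \<theta> * indicator A (permute_state \<theta> \<sigma>)) \<partial>P))"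
    (is "_ = ?rhs")
proof -
  note [measurable] = A B \<pi>_meas r_meas borel_measurable_swap_flow borel_measurable_q_swap[OF A]
    measurable_permute
  have "(\<integral>\<^sup>+\<theta>\<in>B. ennreal (q_swap S \<pi> r \<theta> A) \<partial>density P \<pi>) =
      (\<integral>\<^sup>+\<theta>. ennreal (\<pi> \<theta>) * (ennreal (q_swap S \<pi> r \<theta> A) * indicator B \<theta>) \<partial>P)"
    by (intro nn_integral_density) measurable
  also have "\<dots> = (\<integral>\<^sup>+\<theta>. (\<Sum>\<sigma>\<in>S.
        ennreal ((\<pi> \<theta> * r \<theta> \<sigma> - swap_flow \<pi> r \<theta> \<sigma>) * indicator (A \<inter> B) \<theta>)
      + ennreal (swap_flow \<pi> r \<theta> \<sigma> * indicator B \<theta> * indicator A (permute_state \<theta> \<sigma>))) \<partial>P)"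
    by (intro nn_integral_cong) (simp add: ennreal_density_times_q_swap)
  also have "\<dots> = (\<Sum>\<sigma>\<in>S. \<integral>\<^sup>+\<theta>.
        ennreal ((\<pi> \<theta> * r \<theta> \<sigma> - swap_flow \<pi> r \<theta> \<sigma>) * indicator (A \<inter> B) \<theta>)
      + ennreal (swap_flow \<pi> r \<theta> \<sigma> * indicator B \<theta> * indicator A (permute_state \<theta> \<sigma>)) \<partial>P)"
    by (rule nn_integral_sum) measurable
  also have "\<dots> = ?rhs"
    by (intro sum.cong refl nn_integral_add) measurable
  finally show ?thesis .
qed

lemma nn_integral_swap_flow_inv:
  assumes \<sigma>: "\<sigma> \<in> S" and A: "A \<in> sets P" and B: "B \<in> sets P"
  shows "(\<integral>\<^sup>+\<theta>. ennreal (swap_flow \<pi> r \<theta> \<sigma> * indicator B \<theta> * indicator A (permute_state \<theta> \<sigma>)) \<partial>P) =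
    (\<integral>\<^sup>+\<theta>. ennreal (swap_flow \<pi> r \<theta> (inv \<sigma>) * indicator A \<theta> * indicator B (permute_state \<theta> (inv \<sigma>))) \<partial>P)"
proof -
  define F where "F \<theta> =
    ennreal (swap_flow \<pi> r \<theta> (inv \<sigma>) * indicator A \<theta> * indicator B (permute_state \<theta> (inv \<sigma>)))" for \<theta>
  have F_meas: "F \<in> borel_measurable P"
    using borel_measurable_swap_flow[OF S_inv[OF \<sigma>]] measurable_permute[OF S_inv[OF \<sigma>]] A B
    unfolding F_def by measurable
  have balance: "swap_flow \<pi> r (permute_state \<theta> \<sigma>) (inv \<sigma>) = swap_flow \<pi> r \<theta> \<sigma>"
    if "\<theta> \<in> space P" for \<theta>
    using that \<sigma> space_permute_state[OF that] S_inv
    by (simp add: swap_flow_permute_state[OF S_bij] \<pi>_nonneg r_nonneg)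
  have "(\<integral>\<^sup>+\<theta>. ennreal (swap_flow \<pi> r \<theta> \<sigma> * indicator B \<theta> * indicator A (permute_state \<theta> \<sigma>)) \<partial>P) =
      (\<integral>\<^sup>+\<theta>. F (permute_state \<theta> \<sigma>) \<partial>P)"
    using S_bij[OF \<sigma>] by (intro nn_integral_cong) (simp add: F_def balance mult_ac)
  also have "\<dots> = (\<integral>\<^sup>+\<theta>. F \<theta> \<partial>P)"
    using \<sigma> F_meas by (rule nn_integral_permute_state)
  finally show ?thesis
    unfolding F_def .
qed

theorem reversible_q_swap: "reversible (density P \<pi>) (q_swap S \<pi> r)"
  unfolding reversible_def
proof (intro ballI)
  fix A B assume "A \<in> sets (density P \<pi>)" "B \<in> sets (density P \<pi>)"
  then have A: "A \<in> sets P" and B: "B \<in> sets P"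
    by simp_all
  have "(\<Sum>\<sigma>\<in>S. \<integral>\<^sup>+\<theta>. ennreal (swap_flow \<pi> r \<theta> \<sigma> * indicator B \<theta> * indicator A (permute_state \<theta> \<sigma>)) \<partial>P) =
      (\<Sum>\<sigma>\<in>S. \<integral>\<^sup>+\<theta>. ennreal (swap_flow \<pi> r \<theta> (inv \<sigma>) * indicator A \<theta>
        * indicator B (permute_state \<theta> (inv \<sigma>))) \<partial>P)"
    using A B by (intro sum.cong refl nn_integral_swap_flow_inv)
  also have "\<dots> = (\<Sum>\<sigma>\<in>S. \<integral>\<^sup>+\<theta>. ennreal (swap_flow \<pi> r \<theta> \<sigma> * indicator A \<theta>
        * indicator B (permute_state \<theta> \<sigma>)) \<partial>P)"
    by (rule sum.reindex_bij_witness[where i = inv and j = inv])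
      (auto simp: S_inv inv_inv_eq[OF S_bij])
  finally show "(\<integral>\<^sup>+\<theta>\<in>B. ennreal (q_swap S \<pi> r \<theta> A) \<partial>density P \<pi>) =
      (\<integral>\<^sup>+\<theta>\<in>A. ennreal (q_swap S \<pi> r \<theta> B) \<partial>density P \<pi>)"
    using A B by (simp add: nn_integral_q_swap sum.distrib Int_commute)
qed

end

theorem proposition1:
  fixes M :: "'a::{banach, second_countable_topology} measure"
    and \<Phi> :: "'a \<Rightarrow> real"
    and K :: nat
    and T :: "nat \<Rightarrow> ereal"
    and S :: "(nat \<Rightarrow> nat) set"
    and r :: "(nat \<Rightarrow> 'a) \<Rightarrow> (nat \<Rightarrow> nat) \<Rightarrow> real"
  assumes prior: "prob_space M" and sets_M: "sets M = sets borel"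
    and Phi_meas: "\<Phi> \<in> borel_measurable borel"
    and K_ge: "K \<ge> 1"
    and T1: "T 1 = 1"
    and T_mono: "\<And>i j. 1 \<le> i \<Longrightarrow> i < j \<Longrightarrow> j \<le> K \<Longrightarrow> T i < T j"
    and Z_fin: "\<And>k. k \<in> {1..K} \<Longrightarrow> integrable M (\<lambda>x. exp (- \<Phi> x * invtemp (T k)))"
    and S_perm: "\<And>\<sigma>. \<sigma> \<in> S \<Longrightarrow> \<sigma> permutes {1..K}"
    and S_inv: "\<And>\<sigma>. \<sigma> \<in> S \<Longrightarrow> inv \<sigma> \<in> S"
    and r_range: "\<And>\<theta> \<sigma>. \<theta> \<in> space (PiM {1..K} (\<lambda>_. M)) \<Longrightarrow> \<sigma> \<in> S \<Longrightarrow> 0 \<le> r \<theta> \<sigma> \<and> r \<theta> \<sigma> \<le> 1"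
    and r_sum: "\<And>\<theta>. \<theta> \<in> space (PiM {1..K} (\<lambda>_. M)) \<Longrightarrow> (\<Sum>\<sigma>\<in>S. r \<theta> \<sigma>) = 1"
    and r_meas: "\<And>\<sigma>. \<sigma> \<in> S \<Longrightarrow> (\<lambda>\<theta>. r \<theta> \<sigma>) \<in> borel_measurable (PiM {1..K} (\<lambda>_. M))"
  shows "reversible (PiM {1..K} (\<lambda>k. tmeas M \<Phi> T k)) (q_swap S (pdens K M \<Phi> T) r)"
proof -
  have "\<Phi> \<in> borel_measurable M"
    using Phi_meas by (simp cong: measurable_cong_sets add: sets_M)
  then have tdens_meas: "tdens M \<Phi> T k \<in> borel_measurable M" for k
    unfolding tdens_def by measurable
  have tdens_nonneg: "0 \<le> tdens M \<Phi> T k x" for k x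
    unfolding tdens_def by (simp add: integral_nonneg)
  have product_density:
    "PiM {1..K} (\<lambda>k. tmeas M \<Phi> T k) = density (PiM {1..K} (\<lambda>_. M)) (pdens K M \<Phi> T)"
    unfolding tmeas_def pdens_def
    using prob_space_imp_sigma_finite[OF prior] tdens_meas tdens_nonneg
    by (intro PiM_density) auto
  have "finite S"
    using S_perm by (intro finite_subset[OF _ finite_permutations[of "{1..K}"]]) auto
  have pdens_nonneg: "0 \<le> pdens K M \<Phi> T \<theta>" for \<theta>
    unfolding pdens_def by (simp add: tdens_nonneg prod_nonneg)
  have pdens_meas: "pdens K M \<Phi> T \<in> borel_measurable (PiM {1..K} (\<lambda>_. M))"
    unfolding pdens_def using tdens_meas by measurable
  have r_nonneg: "0 \<le> r \<theta> \<sigma>" if "\<theta> \<in> space (PiM {1..K} (\<lambda>_. M))" "\<sigma> \<in> S" for \<theta> \<sigma>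
    using r_range[OF that] by simp
  show ?thesis
    unfolding product_density
    using \<open>finite S\<close> permutes_bij[OF S_perm] S_inv measurable_permute_state[OF S_perm]
      distr_permute_state[OF prior S_perm] pdens_nonneg pdens_meas r_nonneg r_meas
    by (rule reversible_q_swap)
qed

end
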